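(* Let $q$ be a prime power and let $n\ge 3$ be an odd integer. Let $f(x)$ be a SCRIM polynomial of degree $n$ over $\mathbb{F}_{q^2}$. Then $\mathrm{ord}(f(x))\in D_n$. Moreover, if $\alpha\in\mathbb{F}_{q^{2n}}$ is a root of $f(x)$, then $\alpha$ is a primitive $d$-th root of unity for some $d\in D_n$.
   Context: For $f(x)\in\mathbb{F}_{q^2}[x]$ of degree $m$ with $f(0)\neq0$, the reciprocal is $f^*(x)=x^m f(0)^{-1}f(1/x)$, the conjugate of $g(x)=\sum g_ix^i$ is $\overline{g(x)}=\sum g_i^q x^i$, and the conjugate-reciprocal is $f^\dagger(x)=\overline{f^*(x)}$. A polynomial $f$ with $f(0)\ne 0$ is SCRIM if $f=f^\dagger$ and $f$ is irreducible and monic. The order $\mathrm{ord}(f(x))$ of a polynomial with $f(0)\neq0$ is the smallest positive integer $s$ such that $f(x)$ divides $x^s-1$. $D_n$ denotes the set of all positive divisors of $q^n+1$ that do not divide $q^k+1$ for any integer $0\le k<n$. *)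

theory Defs
  imports "HOL-Computational_Algebra.Computational_Algebra"
begin

definition prime_power_nat :: "nat \<Rightarrow> bool" where
  "prime_power_nat q \<longleftrightarrow> (\<exists>p k. prime p \<and> k > 0 \<and> q = p ^ k)"

definition conj_poly :: "nat \<Rightarrow> 'a::field poly \<Rightarrow> 'a poly" where
  "conj_poly q g = map_poly (\<lambda>c. c ^ q) g"

definition recip_poly :: "'a::field poly \<Rightarrow> 'a poly" where
  "recip_poly f = smult (inverse (coeff f 0)) (reflect_poly f)"

definition conj_recip :: "nat \<Rightarrow> 'a::field poly \<Rightarrow> 'a poly" where
  "conj_recip q f = conj_poly q (recip_poly f)"

definition SCRIM :: "nat \<Rightarrow> 'a::field poly \<Rightarrow> bool" where
  "SCRIM q f \<longleftrightarrow> coeff f 0 \<noteq> 0 \<and> f = conj_recip q f \<and> irreducible f \<and> lead_coeff f = 1"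

definition poly_ord :: "'a::field poly \<Rightarrow> nat" where
  "poly_ord f = (LEAST s. s > 0 \<and> f dvd (monom 1 s - 1))"

definition D_set :: "nat \<Rightarrow> nat \<Rightarrow> nat set" where
  "D_set q n = {d. d > 0 \<and> d dvd q ^ n + 1 \<and> (\<forall>k<n. \<not> d dvd q ^ k + 1)}"

definition field_hom :: "('a::field \<Rightarrow> 'b::field) \<Rightarrow> bool" where
  "field_hom \<phi> \<longleftrightarrow> \<phi> 1 = 1 \<and> (\<forall>x y. \<phi> (x + y) = \<phi> x + \<phi> y) \<and> (\<forall>x y. \<phi> (x * y) = \<phi> x * \<phi> y)"

definition primitive_root_unity :: "nat \<Rightarrow> 'a::field \<Rightarrow> bool" where
  "primitive_root_unity d a \<longleftrightarrow> d > 0 \<and> a ^ d = 1 \<and> (\<forall>k. 0 < k \<and> k < d \<longrightarrow> a ^ k \<noteq> 1)"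

end

(* Let Q = q^2 be the size of the base field and alpha a root of f (degree n) in an extension
   field.  As f is irreducible, its roots are exactly the conjugates alpha^(Q^j), j < n, and
   alpha^(Q^a) = alpha iff n divides a: the period is at most n because the conjugates are
   distinct roots, and at least n because the Q^n linear combinations of 1, ..., alpha^(n-1)
   are all fixed by the period.  Hence the multiplicative order e of alpha, which is also
   ord f, satisfies  e | Q^a - 1  iff  n | a.  Self-conjugate-reciprocity makes alpha^(-q) a
   root too, so alpha^(-q) = alpha^(Q^j) with j < n, i.e. e | q^(2j) + q = q (q^(2j-1) + 1).
   Since e is coprime to q, e | q^(2j-1) + 1, whence n | 2j - 1 < 2n and so 2j - 1 = n; the
   same reasoning rules out e | q^k + 1 for k < n. *)

theory Submission
  imports Defs "HOL-Algebra.Algebraic_Closure_Type" "HOL-Library.Cardinality" "HOL-Number_Theory.Residues"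
begin

hide_const (open) Polynomials.degree Polynomials.lead_coeff up_ring.coeff up_ring.monom
  Divisibility.prime Divisibility.irreducible

section \<open>Field homomorphisms\<close>

context
  fixes \<phi> :: "'a::field \<Rightarrow> 'c::field"
  assumes hom: "field_hom \<phi>"
begin

lemma field_hom_1: "\<phi> 1 = 1"
  using hom by (simp add: field_hom_def)

lemma field_hom_add: "\<phi> (x + y) = \<phi> x + \<phi> y"
  using hom by (simp add: field_hom_def)

lemma field_hom_mult: "\<phi> (x * y) = \<phi> x * \<phi> y"
  using hom by (simp add: field_hom_def)

lemma field_hom_0: "\<phi> 0 = 0"
  using field_hom_add[of 0 0] by (metis add.right_neutral add_left_cancel)

lemma field_hom_diff: "\<phi> (x - y) = \<phi> x - \<phi> y"
  using field_hom_add[of "x - y" y] by (simp add: algebra_simps)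

lemma field_hom_power: "\<phi> (x ^ k) = \<phi> x ^ k"
  by (induction k) (simp_all add: field_hom_1 field_hom_mult)

lemma field_hom_sum: "\<phi> (sum g A) = (\<Sum>i\<in>A. \<phi> (g i))"
  by (induction A rule: infinite_finite_induct) (simp_all add: field_hom_0 field_hom_add)

lemma field_hom_eq_0_iff: "\<phi> x = 0 \<longleftrightarrow> x = 0"
proof
  assume "\<phi> x = 0"
  moreover have "x \<noteq> 0 \<Longrightarrow> \<phi> x * \<phi> (inverse x) = 1"
    by (simp flip: field_hom_mult add: field_hom_1)
  ultimately show "x = 0" by auto
qed (simp add: field_hom_0)

lemma field_hom_of_nat: "\<phi> (of_nat k) = of_nat k"
  by (induction k) (simp_all add: field_hom_0 field_hom_1 field_hom_add)

lemma CHAR_field_hom: "CHAR('c) = CHAR('a)"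
  by (rule CHAR_eqI)
    (simp_all flip: field_hom_of_nat add: field_hom_eq_0_iff of_nat_eq_0_iff_char_dvd)

lemma map_poly_field_hom_diff: "map_poly \<phi> (p - r) = map_poly \<phi> p - map_poly \<phi> r"
  by (rule poly_eqI) (simp add: coeff_map_poly field_hom_0 field_hom_diff)

lemma map_poly_field_hom_mult: "map_poly \<phi> (p * r) = map_poly \<phi> p * map_poly \<phi> r"
  by (rule poly_eqI) (simp add: coeff_map_poly coeff_mult field_hom_0 field_hom_sum field_hom_mult)

lemma map_poly_field_hom_sum: "map_poly \<phi> (sum g A) = (\<Sum>i\<in>A. map_poly \<phi> (g i))"
  by (rule poly_eqI) (simp add: coeff_map_poly coeff_sum field_hom_0 field_hom_sum)

lemma degree_map_poly_field_hom: "degree (map_poly \<phi> p) = degree p"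
  by (rule degree_map_poly) (simp add: field_hom_eq_0_iff)

lemma map_poly_field_hom_reflect_poly: "map_poly \<phi> (reflect_poly p) = reflect_poly (map_poly \<phi> p)"
  by (rule poly_eqI) (simp add: coeff_map_poly coeff_reflect_poly field_hom_0 degree_map_poly_field_hom)

end

section \<open>Frobenius powers and finite fields\<close>

lemma poly_map_poly_power_CHAR_power:
  fixes p :: "'c::field poly"
  assumes "prime CHAR('c)" and "m = CHAR('c) ^ r"
  shows "poly (map_poly (\<lambda>c. c ^ m) p) (y ^ m) = poly p y ^ m"
proof -
  have "m > 0"
    using assms by (simp add: prime_gt_0_nat)
  then have "degree (map_poly (\<lambda>c. c ^ m) p) = degree p"
    by (intro degree_map_poly) simp
  then have "poly (map_poly (\<lambda>c. c ^ m) p) (y ^ m) = (\<Sum>i\<le>degree p. (coeff p i * y ^ i) ^ m)"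
    using \<open>m > 0\<close>
    by (simp add: poly_altdef coeff_map_poly power_mult_distrib
        flip: power_mult[of y] add: mult.commute[of m])
  also have "\<dots> = poly p y ^ m"
    by (simp add: poly_altdef freshmans_dream_sum'[OF assms])
  finally show ?thesis .
qed

lemma inj_power_CHAR_power:
  assumes "prime CHAR('c::field)" and "m = CHAR('c) ^ r"
  shows "inj (\<lambda>y::'c. y ^ m)"
proof (rule injI)
  fix y z :: 'c
  assume "y ^ m = z ^ m"
  moreover have "((y - z) + z) ^ m = (y - z) ^ m + z ^ m"
    by (rule freshmans_dream'[OF assms])
  ultimately have "(y - z) ^ m = 0"
    by simp
  then show "y = z"
    using assms by (simp add: prime_gt_0_nat)
qed

text \<open>The library's \<open>finite_field_power_card_eq_same\<close> needs the sort \<open>finite_field\<close>,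
  which a type of sort \<open>{finite, field}\<close> does not carry.\<close>

lemma finite_field_power_card:
  fixes x :: "'a::{finite,field}"
  shows "x ^ CARD('a) = x"
proof (cases "x = 0")
  case False
  have "x ^ card (UNIV - {0::'a}) * \<Prod>(UNIV - {0}) = (\<Prod>y\<in>UNIV - {0::'a}. x * y)"
    by (simp add: prod.distrib)
  also have "\<dots> = \<Prod>(UNIV - {0::'a})"
    by (rule prod.reindex_bij_witness[of _ "\<lambda>y. y / x" "\<lambda>y. x * y"]) (use False in auto)
  finally have "x ^ (CARD('a) - 1) = 1"
    by (simp add: card_Diff_singleton)
  moreover have "CARD('a) = Suc (CARD('a) - 1)"
    using finite_UNIV_card_ge_0[where ?'a = 'a] by simp
  ultimately show ?thesis
    by (metis power_Suc mult.right_neutral)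
qed (simp add: finite_UNIV_card_ge_0)

lemma finite_field_power_card_power:
  fixes x :: "'a::{finite,field}"
  shows "x ^ (CARD('a) ^ j) = x"
  by (induction j) (simp_all add: finite_field_power_card power_mult)

lemma CHAR_eq_prime_of_card:
  assumes "prime p" and "CARD('a::{finite,field}) = p ^ m"
  shows "CHAR('a) = p"
proof -
  have "prime CHAR('a)"
    by (rule prime_CHAR_semidom, rule finite_imp_CHAR_pos) simp
  moreover have "CHAR('a) dvd p ^ m"
    using CHAR_dvd_CARD[where ?'a = 'a] assms(2) by simp
  ultimately show ?thesis
    using assms(1) prime_dvd_power primes_dvd_imp_eq by blast
qed

lemma power_fixed_points_finite_card_le:
  assumes "M > 1"
  shows "finite {y::'c::field. y ^ M = y} \<and> card {y::'c. y ^ M = y} \<le> M"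
proof -
  define P :: "'c poly" where "P = monom 1 M - monom 1 1"
  have "coeff P M = 1"
    using assms by (simp add: P_def coeff_monom)
  then have "P \<noteq> 0"
    by auto
  have "degree P \<le> M"
    unfolding P_def using assms by (intro degree_diff_le) (auto simp: degree_monom_eq)
  moreover have "{y. y ^ M = y} = {y. poly P y = 0}"
    by (auto simp: P_def poly_monom)
  ultimately show ?thesis
    using poly_roots_finite[OF \<open>P \<noteq> 0\<close>] card_poly_roots_bound[OF \<open>P \<noteq> 0\<close>] by simp
qed

section \<open>Divisibility of natural numbers\<close>

lemma add_diff_closed_eq_multiples:
  fixes P :: "nat \<Rightarrow> bool"
  assumes add: "\<And>a b. P a \<Longrightarrow> P b \<Longrightarrow> P (a + b)"
    and diff: "\<And>a b. P (a + b) \<Longrightarrow> P a \<Longrightarrow> P b"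
    and "P m" "m > 0"
  obtains t where "t > 0" "\<And>a. P a \<longleftrightarrow> t dvd a"
proof -
  define t where "t = (LEAST t. t > 0 \<and> P t)"
  have t: "t > 0" "P t"
    using LeastI[of "\<lambda>t. t > 0 \<and> P t" m] assms(3,4) unfolding t_def by auto
  have below_t: "\<not> P s" if "0 < s" "s < t" for s
    using that not_less_Least unfolding t_def by blast
  have "P 0"
    using diff[of t 0] t by simp
  then have multiple: "P (t * k)" for k
    by (induction k) (use t add in auto)
  have "P a \<longleftrightarrow> t dvd a" for a
  proof
    assume "P a"
    moreover have "a = t * (a div t) + a mod t"
      by simp
    ultimately have "P (a mod t)"
      using diff multiple by metis
    then show "t dvd a"
      using below_t[of "a mod t"] t by (auto simp: dvd_eq_mod_eq_0)
  qed (use multiple in auto)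
  with t show ?thesis
    using that by blast
qed

lemma prime_power_nat_power:
  assumes "prime_power_nat q" and "m > 0"
  shows "prime_power_nat (q ^ m)"
proof -
  obtain p k where "prime p" "k > 0" "q = p ^ k"
    using assms(1) by (auto simp: prime_power_nat_def)
  then have "prime p \<and> k * m > 0 \<and> q ^ m = p ^ (k * m)"
    using assms(2) by (simp add: power_mult)
  then show ?thesis
    unfolding prime_power_nat_def by blast
qed

lemma dvd_square_minus_one:
  fixes e x :: nat
  assumes "e dvd x + 1"
  shows "e dvd x ^ 2 - 1"
proof -
  have "x ^ 2 - 1 = (x + 1) * (x - 1)"
    by (cases x) (simp_all add: power2_eq_square algebra_simps)
  then show ?thesis
    by (metis assms dvd_mult2)
qed

lemma mem_D_setI:
  fixes e q n j :: nat
  assumes "e > 0" and "coprime e q" and "n > 1"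
    and period: "\<And>a. e dvd q ^ (2 * a) - 1 \<longleftrightarrow> n dvd a"
    and "j < n" and "e dvd q ^ (2 * j) + q"
  shows "e \<in> D_set q n"
proof -
  have exponent: "n dvd k" if "e dvd q ^ k + 1" for k
    using period[of k] dvd_square_minus_one[OF that] by (simp add: power_mult mult.commute)
  have not_dvd_q_plus_1: "\<not> e dvd q + 1"
    using exponent[of 1] \<open>n > 1\<close> by auto
  have "\<not> e dvd q ^ k + 1" if "k < n" for k
  proof
    assume "e dvd q ^ k + 1"
    with exponent \<open>k < n\<close> have "k = 0"
      by (metis dvd_imp_le neq0_conv not_le)
    with \<open>e dvd q ^ k + 1\<close> have "e dvd 2"
      by (simp add: numeral_2_eq_2)
    then have "e = 1 \<or> e = 2"
      using \<open>e > 0\<close> dvd_imp_le[of e 2] by auto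
    moreover have "odd q" if "e = 2"
      using \<open>coprime e q\<close> that by auto
    ultimately show False
      using not_dvd_q_plus_1 by auto
  qed
  moreover have "e dvd q ^ n + 1"
  proof -
    have "j \<noteq> 0"
      using not_dvd_q_plus_1 \<open>e dvd q ^ (2 * j) + q\<close> by (metis add.commute mult_0_right power_0)
    then have "q ^ (2 * j) + q = q * (q ^ (2 * j - 1) + 1)"
      by (cases j) (simp_all add: algebra_simps)
    then have "e dvd q ^ (2 * j - 1) + 1"
      using \<open>e dvd q ^ (2 * j) + q\<close> \<open>coprime e q\<close> coprime_dvd_mult_right_iff by metis
    then obtain k where k: "2 * j - 1 = n * k"
      using exponent by blast
    have "odd (2 * j - 1)" "2 * j - 1 < 2 * n"
      using \<open>j \<noteq> 0\<close> \<open>j < n\<close> by auto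
    with k have "k = 1"
      by (cases k) (auto simp: less_Suc_eq_0_disj)
    with k have "2 * j - 1 = n"
      by simp
    with \<open>e dvd q ^ (2 * j - 1) + 1\<close> show ?thesis
      by simp
  qed
  ultimately show ?thesis
    using \<open>e > 0\<close> by (simp add: D_set_def)
qed


section \<open>Roots of irreducible polynomials\<close>

locale irreducible_root =
  fixes \<phi> :: "'a::field \<Rightarrow> 'c::field" and f :: "'a poly" and \<alpha> :: 'c
  assumes hom: "field_hom \<phi>" and irreducible: "irreducible f"
    and root: "poly (map_poly \<phi> f) \<alpha> = 0"
begin

lemma poly_map_poly_mod:
  assumes "poly (map_poly \<phi> p) \<alpha> = 0" and "poly (map_poly \<phi> h) \<alpha> = 0"
  shows "poly (map_poly \<phi> (h mod p)) \<alpha> = 0"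
  using assms
  by (simp add: minus_div_mult_eq_mod[symmetric] map_poly_field_hom_diff[OF hom]
      map_poly_field_hom_mult[OF hom])

lemma no_root_below_degree:
  assumes "p \<noteq> 0" and "degree p < degree f"
  shows "poly (map_poly \<phi> p) \<alpha> \<noteq> 0"
  using assms
proof (induction "degree p" arbitrary: p rule: less_induct)
  case less
  show ?case
  proof
    assume p_root: "poly (map_poly \<phi> p) \<alpha> = 0"
    have "f mod p = 0"
      using less.hyps[of "f mod p"] less.prems poly_map_poly_mod[OF p_root root]
      by (metis degree_mod_less order.strict_trans)
    then have "p dvd f"
      by (simp add: dvd_eq_mod_eq_0)
    moreover have "\<not> f dvd p"
      using less.prems by (auto dest: dvd_imp_degree_le)
    ultimately have "is_unit p"
      using irreducibleD'[OF irreducible] by blast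
    then obtain c where "p = [:c:]" "c dvd 1"
      by (auto simp: is_unit_poly_iff)
    then show False
      using p_root by (simp add: map_poly_pCons field_hom_0[OF hom] field_hom_eq_0_iff[OF hom])
  qed
qed

lemma root_map_poly_iff_dvd: "poly (map_poly \<phi> h) \<alpha> = 0 \<longleftrightarrow> f dvd h"
proof
  assume "f dvd h"
  then show "poly (map_poly \<phi> h) \<alpha> = 0"
    using root by (auto simp: map_poly_field_hom_mult[OF hom])
next
  assume "poly (map_poly \<phi> h) \<alpha> = 0"
  then have "poly (map_poly \<phi> (h mod f)) \<alpha> = 0"
    by (rule poly_map_poly_mod[OF root])
  moreover have "f \<noteq> 0"
    using irreducible by auto
  ultimately have "h mod f = 0"
    using no_root_below_degree degree_mod_less by blast
  then show "f dvd h"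
    by (simp add: dvd_eq_mod_eq_0)
qed

lemma dvd_monom_minus_one_iff: "f dvd monom 1 s - 1 \<longleftrightarrow> \<alpha> ^ s = 1"
  using root_map_poly_iff_dvd[of "monom 1 s - 1"]
  by (simp add: map_poly_field_hom_diff[OF hom] map_poly_monom field_hom_0[OF hom]
      field_hom_1[OF hom] poly_monom)

lemma poly_ord_eqI:
  assumes "e > 0" and "\<And>s. \<alpha> ^ s = 1 \<longleftrightarrow> e dvd s"
  shows "poly_ord f = e"
  unfolding poly_ord_def dvd_monom_minus_one_iff
  by (rule Least_equality) (use assms in \<open>auto dest: dvd_imp_le\<close>)

lemma map_poly_ne_0: "map_poly \<phi> f \<noteq> 0"
  using irreducible by (auto simp: map_poly_eq_0_iff field_hom_0[OF hom] field_hom_eq_0_iff[OF hom])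

lemma degree_pos: "degree f > 0"
proof -
  have "f \<noteq> 0"
    using irreducible by auto
  then show ?thesis
    using is_unit_iff_degree irreducible_not_unit[OF irreducible] by auto
qed

lemma inj_on_linear_combinations:
  "inj_on (\<lambda>c. \<Sum>i<degree f. \<phi> (c i) * \<alpha> ^ i) (PiE {..<degree f} (\<lambda>_. UNIV))"
proof (rule inj_onI)
  fix c c'
  assume c: "c \<in> PiE {..<degree f} (\<lambda>_. UNIV)" "c' \<in> PiE {..<degree f} (\<lambda>_. UNIV)"
    and eq: "(\<Sum>i<degree f. \<phi> (c i) * \<alpha> ^ i) = (\<Sum>i<degree f. \<phi> (c' i) * \<alpha> ^ i)"
  define h where "h = (\<Sum>i<degree f. monom (c i - c' i) i)"
  have "map_poly \<phi> h = (\<Sum>i<degree f. monom (\<phi> (c i) - \<phi> (c' i)) i)"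
    by (simp add: h_def map_poly_field_hom_sum[OF hom] map_poly_monom field_hom_0[OF hom]
        field_hom_diff[OF hom])
  then have "poly (map_poly \<phi> h) \<alpha> =
      (\<Sum>i<degree f. \<phi> (c i) * \<alpha> ^ i) - (\<Sum>i<degree f. \<phi> (c' i) * \<alpha> ^ i)"
    by (simp add: poly_sum poly_monom left_diff_distrib sum_subtractf)
  then have "f dvd h"
    using eq root_map_poly_iff_dvd by simp
  have "h = 0"
  proof (rule ccontr)
    assume "h \<noteq> 0"
    then have "degree f \<le> degree h"
      using dvd_imp_degree_le[OF \<open>f dvd h\<close>] by blast
    moreover have "degree h \<le> degree f - 1"
      unfolding h_def by (intro degree_sum_le) (auto intro: order.trans[OF degree_monom_le])
    ultimately show False
      using degree_pos by linarith
  qed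
  moreover have "coeff h i = c i - c' i" if "i < degree f" for i
    using that by (simp add: h_def coeff_sum coeff_monom)
  ultimately have "c i = c' i" if "i < degree f" for i
    using that by simp
  then show "c = c'"
    using c by (intro PiE_ext) auto
qed

end

locale finite_irreducible_root = irreducible_root \<phi> f \<alpha>
  for \<phi> :: "'a::{finite,field} \<Rightarrow> 'c::field" and f \<alpha> +
  assumes prime_power_card: "prime_power_nat CARD('a)"
begin

lemma prime_CHAR: "prime CHAR('c)"
proof -
  have "CHAR('a) > 0"
    by (rule finite_imp_CHAR_pos) simp
  then show ?thesis
    using CHAR_field_hom[OF hom] prime_CHAR_semidom by simp
qed

lemma card_power_eq_CHAR_power: "\<exists>r. CARD('a) ^ j = CHAR('c) ^ r"
proof -
  obtain p k where p: "prime p" "CARD('a) = p ^ k"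
    using prime_power_card by (auto simp: prime_power_nat_def)
  then have "CARD('a) ^ j = CHAR('c) ^ (k * j)"
    using CHAR_eq_prime_of_card[OF p] CHAR_field_hom[OF hom] by (simp add: power_mult)
  then show ?thesis ..
qed

lemma poly_map_poly_power_card_power:
  "poly (map_poly \<phi> p) (y ^ CARD('a) ^ j) = poly (map_poly \<phi> p) y ^ CARD('a) ^ j"
proof -
  obtain r where r: "CARD('a) ^ j = CHAR('c) ^ r"
    using card_power_eq_CHAR_power by blast
  have "map_poly (\<lambda>c. c ^ CARD('a) ^ j) (map_poly \<phi> p) = map_poly \<phi> p"
    by (rule poly_eqI)
      (simp add: coeff_map_poly field_hom_0[OF hom] finite_field_power_card_power
        flip: field_hom_power[OF hom])
  with poly_map_poly_power_CHAR_power[OF prime_CHAR r, of "map_poly \<phi> p" y] show ?thesis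
    by simp
qed

lemma inj_power_card_power: "inj (\<lambda>y::'c. y ^ CARD('a) ^ j)"
proof -
  obtain r where "CARD('a) ^ j = CHAR('c) ^ r"
    using card_power_eq_CHAR_power by blast
  then show ?thesis
    by (rule inj_power_CHAR_power[OF prime_CHAR])
qed

lemma conjugate_root: "poly (map_poly \<phi> f) (\<alpha> ^ CARD('a) ^ j) = 0"
  using poly_map_poly_power_card_power[of f \<alpha> j] root by simp

lemma finite_roots: "finite {y. poly (map_poly \<phi> f) y = 0}"
  by (rule poly_roots_finite[OF map_poly_ne_0])

lemma power_card_power_add_eq_iff:
  fixes y :: 'c
  shows "y ^ CARD('a) ^ (a + b) = y ^ CARD('a) ^ a \<longleftrightarrow> y ^ CARD('a) ^ b = y"
proof -
  have "y ^ CARD('a) ^ (a + b) = y ^ (CARD('a) ^ b * CARD('a) ^ a)"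
    by (simp only: power_add mult.commute[of "CARD('a) ^ a"])
  also have "\<dots> = (y ^ CARD('a) ^ b) ^ CARD('a) ^ a"
    by (rule power_mult)
  finally show ?thesis
    by (simp only: inj_eq[OF inj_power_card_power])
qed

lemma ex_period:
  obtains t where "t > 0" "\<And>a. \<alpha> ^ CARD('a) ^ a = \<alpha> \<longleftrightarrow> t dvd a"
proof -
  have "range (\<lambda>j. \<alpha> ^ CARD('a) ^ j) \<subseteq> {y. poly (map_poly \<phi> f) y = 0}"
    using conjugate_root by auto
  then have "\<not> inj (\<lambda>j. \<alpha> ^ CARD('a) ^ j)"
    using finite_roots finite_subset finite_imageD infinite_UNIV_nat by blast
  then obtain i j where "\<alpha> ^ CARD('a) ^ i = \<alpha> ^ CARD('a) ^ j" "i < j"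
    unfolding inj_def by (metis linorder_neqE_nat)
  then have "\<alpha> ^ CARD('a) ^ (j - i) = \<alpha>" "j - i > 0"
    using power_card_power_add_eq_iff[of \<alpha> i "j - i"] by auto
  show ?thesis
  proof (rule add_diff_closed_eq_multiples[of "\<lambda>a. \<alpha> ^ CARD('a) ^ a = \<alpha>"])
    fix a b
    assume "\<alpha> ^ CARD('a) ^ a = \<alpha>" "\<alpha> ^ CARD('a) ^ b = \<alpha>"
    then show "\<alpha> ^ CARD('a) ^ (a + b) = \<alpha>"
      using power_card_power_add_eq_iff[of \<alpha> a b] by simp
  next
    fix a b
    assume "\<alpha> ^ CARD('a) ^ (a + b) = \<alpha>" "\<alpha> ^ CARD('a) ^ a = \<alpha>"
    then show "\<alpha> ^ CARD('a) ^ b = \<alpha>"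
      using power_card_power_add_eq_iff[of \<alpha> a b] by simp
  qed (use that \<open>\<alpha> ^ CARD('a) ^ (j - i) = \<alpha>\<close> \<open>j - i > 0\<close> in auto)
qed

lemma inj_on_conjugates:
  assumes period: "\<And>a. \<alpha> ^ CARD('a) ^ a = \<alpha> \<longleftrightarrow> t dvd a"
  shows "inj_on (\<lambda>j. \<alpha> ^ CARD('a) ^ j) {..<t}"
proof -
  have "i = j" if "i < t" "j < t" "i \<le> j" "\<alpha> ^ CARD('a) ^ i = \<alpha> ^ CARD('a) ^ j" for i j
  proof -
    have "\<alpha> ^ CARD('a) ^ (j - i) = \<alpha>"
      using that power_card_power_add_eq_iff[of \<alpha> i "j - i"] by simp
    then have "t dvd j - i"
      using period by blast
    with that show "i = j"
      by (auto dest: dvd_imp_le)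
  qed
  then show ?thesis
    by (intro inj_onI) (metis lessThan_iff nat_le_linear)
qed

lemma period_le_degree:
  assumes "\<And>a. \<alpha> ^ CARD('a) ^ a = \<alpha> \<longleftrightarrow> t dvd a"
  shows "t \<le> degree f"
proof -
  have "t = card ((\<lambda>j. \<alpha> ^ CARD('a) ^ j) ` {..<t})"
    using card_image[OF inj_on_conjugates[OF assms]] by simp
  also have "\<dots> \<le> card {y. poly (map_poly \<phi> f) y = 0}"
    using finite_roots conjugate_root by (intro card_mono) auto
  also have "\<dots> \<le> degree f"
    using card_poly_roots_bound[OF map_poly_ne_0] by (simp add: degree_map_poly_field_hom[OF hom])
  finally show ?thesis .
qed

lemma linear_combination_power_card_power:
  assumes "\<alpha> ^ CARD('a) ^ t = \<alpha>"
  shows "(\<Sum>i\<in>A. \<phi> (c i) * \<alpha> ^ i) ^ CARD('a) ^ t = (\<Sum>i\<in>A. \<phi> (c i) * \<alpha> ^ i)"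
proof -
  obtain r where r: "CARD('a) ^ t = CHAR('c) ^ r"
    using card_power_eq_CHAR_power by blast
  have "(\<phi> (c i) * \<alpha> ^ i) ^ CARD('a) ^ t = \<phi> (c i) * \<alpha> ^ i" for i
  proof -
    have "(\<phi> (c i) * \<alpha> ^ i) ^ CARD('a) ^ t = \<phi> (c i ^ CARD('a) ^ t) * (\<alpha> ^ CARD('a) ^ t) ^ i"
      by (simp add: power_mult_distrib field_hom_power[OF hom] flip: power_mult)
        (simp add: mult.commute)
    then show ?thesis
      using assms by (simp add: finite_field_power_card_power)
  qed
  then show ?thesis
    by (simp add: freshmans_dream_sum'[OF prime_CHAR r])
qed

lemma card_gt_1: "CARD('a) > 1"
proof -
  have "card {0, 1::'a} \<le> CARD('a)"
    by (rule card_mono) simp_all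
  then show ?thesis
    by simp
qed

lemma degree_le_period:
  assumes "t > 0" and "\<alpha> ^ CARD('a) ^ t = \<alpha>"
  shows "degree f \<le> t"
proof -
  define L where "L c = (\<Sum>i<degree f. \<phi> (c i) * \<alpha> ^ i)" for c
  define V :: "(nat \<Rightarrow> 'a) set" where "V = PiE {..<degree f} (\<lambda>_. UNIV)"
  have M: "CARD('a) ^ t > 1"
    using one_less_power[OF card_gt_1 \<open>t > 0\<close>] .
  have "CARD('a) ^ degree f = card V"
    by (simp add: V_def card_PiE)
  also have "\<dots> = card (L ` V)"
    using card_image[OF inj_on_linear_combinations] by (simp add: L_def V_def)
  also have "\<dots> \<le> card {y::'c. y ^ CARD('a) ^ t = y}"
    using power_fixed_points_finite_card_le[OF M] linear_combination_power_card_power[OF assms(2)]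
    by (intro card_mono) (auto simp: L_def)
  also have "\<dots> \<le> CARD('a) ^ t"
    using power_fixed_points_finite_card_le[OF M] by blast
  finally show ?thesis
    using card_gt_1 by simp
qed

lemma power_card_power_eq_self_iff: "\<alpha> ^ CARD('a) ^ a = \<alpha> \<longleftrightarrow> degree f dvd a"
proof -
  obtain t where t: "t > 0" "\<And>a. \<alpha> ^ CARD('a) ^ a = \<alpha> \<longleftrightarrow> t dvd a"
    using ex_period by blast
  have "t = degree f"
    using period_le_degree[OF t(2)] degree_le_period[OF t(1)] t(2) by (simp add: le_antisym)
  with t show ?thesis
    by simp
qed

lemma roots_eq_conjugates:
  "{y. poly (map_poly \<phi> f) y = 0} = (\<lambda>j. \<alpha> ^ CARD('a) ^ j) ` {..<degree f}"
proof (rule sym, rule card_seteq[OF finite_roots])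
  show "(\<lambda>j. \<alpha> ^ CARD('a) ^ j) ` {..<degree f} \<subseteq> {y. poly (map_poly \<phi> f) y = 0}"
    using conjugate_root by auto
  have "card ((\<lambda>j. \<alpha> ^ CARD('a) ^ j) ` {..<degree f}) = degree f"
    using card_image[OF inj_on_conjugates[OF power_card_power_eq_self_iff]] by simp
  then show "card {y. poly (map_poly \<phi> f) y = 0} \<le> card ((\<lambda>j. \<alpha> ^ CARD('a) ^ j) ` {..<degree f})"
    using card_poly_roots_bound[OF map_poly_ne_0] by (simp add: degree_map_poly_field_hom[OF hom])
qed

lemma multiplicative_order:
  assumes "\<alpha> \<noteq> 0"
  obtains e where "e > 0" "\<And>s. \<alpha> ^ s = 1 \<longleftrightarrow> e dvd s"
    and "\<And>a. e dvd CARD('a) ^ a - 1 \<longleftrightarrow> degree f dvd a"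
proof -
  have power_minus_one: "\<alpha> ^ (M - 1) = 1 \<longleftrightarrow> \<alpha> ^ M = \<alpha>" if "M > 0" for M
    using assms that power_eq_if[of \<alpha> M] by auto
  have "\<alpha> ^ (CARD('a) ^ degree f - 1) = 1"
    using power_minus_one[of "CARD('a) ^ degree f"] power_card_power_eq_self_iff by simp
  moreover have "CARD('a) ^ degree f - 1 > 0"
    using one_less_power[OF card_gt_1 degree_pos] by simp
  ultimately obtain e where e: "e > 0" "\<And>s. \<alpha> ^ s = 1 \<longleftrightarrow> e dvd s"
    by (rule add_diff_closed_eq_multiples[rotated 2]) (simp_all add: power_add)
  moreover have "e dvd CARD('a) ^ a - 1 \<longleftrightarrow> degree f dvd a" for a
    using e(2)[of "CARD('a) ^ a - 1"] power_minus_one[of "CARD('a) ^ a"]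
      power_card_power_eq_self_iff[of a] by simp
  ultimately show ?thesis
    using that by blast
qed

end

section \<open>Self-conjugate-reciprocal irreducible polynomials\<close>

lemma root_conj_recip:
  fixes \<phi> :: "'a::field \<Rightarrow> 'c::field"
  assumes hom: "field_hom \<phi>" and "prime CHAR('c)" and q: "q = CHAR('c) ^ k"
    and root: "poly (map_poly \<phi> f) \<alpha> = 0" and "\<alpha> \<noteq> 0"
  shows "poly (map_poly \<phi> (conj_recip q f)) (inverse \<alpha> ^ q) = 0"
proof -
  have "q > 0"
    using assms(2) q by (simp add: prime_gt_0_nat)
  then have "map_poly \<phi> (conj_recip q f) = map_poly (\<lambda>c. c ^ q) (map_poly \<phi> (recip_poly f))"
    by (intro poly_eqI)
      (simp add: conj_recip_def conj_poly_def coeff_map_poly field_hom_0[OF hom] field_hom_power[OF hom])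
  then have "poly (map_poly \<phi> (conj_recip q f)) (inverse \<alpha> ^ q) =
      poly (map_poly \<phi> (recip_poly f)) (inverse \<alpha>) ^ q"
    using poly_map_poly_power_CHAR_power[OF assms(2) q] by simp
  also have "poly (map_poly \<phi> (recip_poly f)) (inverse \<alpha>) = 0"
    using root \<open>\<alpha> \<noteq> 0\<close>
    by (simp add: recip_poly_def map_poly_smult field_hom_0[OF hom] field_hom_mult[OF hom]
        map_poly_field_hom_reflect_poly[OF hom] poly_reflect_poly_nz)
  finally show ?thesis
    using \<open>q > 0\<close> by simp
qed

lemma SCRIM_poly_ord_in_D_set:
  fixes \<phi> :: "'a::{finite,field} \<Rightarrow> 'c::field"
  assumes q: "prime_power_nat q" and card: "CARD('a) = q ^ 2"
    and "degree f = n" and "n > 1" and "SCRIM q f"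
    and hom: "field_hom \<phi>" and root: "poly (map_poly \<phi> f) \<alpha> = 0"
  shows "poly_ord f \<in> D_set q n \<and> primitive_root_unity (poly_ord f) \<alpha>"
proof -
  have "irreducible f" "conj_recip q f = f" "coeff f 0 \<noteq> 0"
    using \<open>SCRIM q f\<close> unfolding SCRIM_def by metis+
  moreover have "prime_power_nat CARD('a)"
    using prime_power_nat_power[OF q] card by simp
  ultimately interpret finite_irreducible_root \<phi> f \<alpha>
    using hom root by unfold_locales
  have "\<alpha> \<noteq> 0"
    using root \<open>coeff f 0 \<noteq> 0\<close>
    by (auto simp: poly_0_coeff_0 coeff_map_poly field_hom_0[OF hom] field_hom_eq_0_iff[OF hom])
  obtain e where e: "e > 0" "\<And>s. \<alpha> ^ s = 1 \<longleftrightarrow> e dvd s"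
    and period: "\<And>a. e dvd q ^ (2 * a) - 1 \<longleftrightarrow> n dvd a"
    using multiplicative_order[OF \<open>\<alpha> \<noteq> 0\<close>] card \<open>degree f = n\<close> by (metis power_mult)
  obtain p k where p: "prime p" "q = p ^ k"
    using q by (auto simp: prime_power_nat_def)
  have "coprime e q"
  proof -
    have "q > 0"
      using p by (simp add: prime_gt_0_nat)
    then have "coprime (q ^ (2 * n) - 1) q"
      using \<open>n > 1\<close> coprime_diff_one_left_nat[of "q ^ (2 * n)"]
      by (simp del: coprime_diff_one_left_nat)
    moreover have "e dvd q ^ (2 * n) - 1"
      using period[of n] by simp
    ultimately show ?thesis
      using coprime_divisors[OF _ dvd_refl] by blast
  qed
  have "CARD('a) = p ^ (2 * k)"
    using card p(2) by (simp add: power_mult mult.commute)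
  then have "CHAR('a) = p"
    by (rule CHAR_eq_prime_of_card[OF p(1)])
  then have "q = CHAR('c) ^ k"
    using CHAR_field_hom[OF hom] p(2) by simp
  then have "inverse \<alpha> ^ q \<in> {y. poly (map_poly \<phi> f) y = 0}"
    using root_conj_recip[OF hom prime_CHAR \<open>q = CHAR('c) ^ k\<close> root \<open>\<alpha> \<noteq> 0\<close>]
      \<open>conj_recip q f = f\<close> by simp
  then obtain j where "j < n" "inverse \<alpha> ^ q = \<alpha> ^ q ^ (2 * j)"
    using roots_eq_conjugates \<open>degree f = n\<close> card by (auto simp: power_mult)
  then have "\<alpha> ^ (q ^ (2 * j) + q) = (\<alpha> * inverse \<alpha>) ^ q"
    by (simp add: power_add power_mult_distrib)
  then have "e dvd q ^ (2 * j) + q"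
    using e(2) \<open>\<alpha> \<noteq> 0\<close> by simp
  then have "e \<in> D_set q n"
    using mem_D_setI[OF e(1) \<open>coprime e q\<close> \<open>n > 1\<close> period \<open>j < n\<close>] by blast
  moreover have "poly_ord f = e"
    by (rule poly_ord_eqI[OF e])
  moreover have "primitive_root_unity e \<alpha>"
    using e by (auto simp: primitive_root_unity_def dest: dvd_imp_le)
  ultimately show ?thesis
    by simp
qed

theorem mainTheorem5:
  fixes q n :: nat
    and f :: "'a::{finite,field} poly"
  assumes "prime_power_nat q"
    and "card (UNIV :: 'a set) = q ^ 2"
    and "odd n" and "n \<ge> 3"
    and "degree f = n"
    and "SCRIM q f"
  shows "poly_ord f \<in> D_set q n \<and>
    (\<forall>(\<phi> :: 'a \<Rightarrow> 'b::{finite,field}) (\<alpha> :: 'b).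
        card (UNIV :: 'b set) = q ^ (2 * n) \<longrightarrow> field_hom \<phi> \<longrightarrow> poly (map_poly \<phi> f) \<alpha> = 0 \<longrightarrow>
        (\<exists>d \<in> D_set q n. primitive_root_unity d \<alpha>))"
proof -
  have "n > 1"
    using \<open>n \<ge> 3\<close> by simp
  note order_in_D_set = SCRIM_poly_ord_in_D_set[OF assms(1,2,5) this assms(6)]
  have "field_hom (to_ac :: 'a \<Rightarrow> 'a alg_closure)"
    by (simp add: field_hom_def)
  moreover obtain \<alpha> where "poly (map_poly (to_ac :: 'a \<Rightarrow> 'a alg_closure) f) \<alpha> = 0"
    using alg_closed_imp_poly_has_root[of "map_poly to_ac f"] \<open>degree f = n\<close> \<open>n > 1\<close>
      degree_map_poly_field_hom[OF calculation] by auto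
  ultimately have "poly_ord f \<in> D_set q n"
    using order_in_D_set by blast
  then show ?thesis
    using order_in_D_set by blast
qed

end
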